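(* Suppose $\sigma_n\in[0,1]$ satisfies $\sigma_n\sim n^{-a}$ for some $a\in(0,1/2)$. Then almost surely there is a constant $C_\omega$ such that for all $N\ge2$, $$\max_{1\le m\le N}\max_{t\in[0,1]}\Bigl|\sum_{n=1}^{N-m}Y_{n+m}(\omega)\,Y_n(\omega)\,e(nt)\Bigr|\le C_\omega\,N^{1/2-a}\sqrt{\log N}.$$
   Context: Random setup: $(\Omega,\mathcal F,\mathbb P)$ is a probability space and $(X_n)_{n\in\mathbb N}$ are independent random variables with $\mathbb P(X_n=1)=\sigma_n$, $\mathbb P(X_n=0)=1-\sigma_n$; $Y_n=X_n-\sigma_n$. $e(t)=e^{2\pi i t}$. $u_n\sim v_n$ means $u_n/v_n$ converges to a nonzero constant. *)

theory Defs
  imports "HOL-Probability.Probability"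
begin

definition e :: "real \<Rightarrow> complex" where
  "e t = exp (2 * of_real pi * \<i> * of_real t)"

end

theory Submission
  imports Defs "HOL-Real_Asymp.Real_Asymp"
begin

(*
  Write Y n = X n - sigma n and W m n = Y (n + m) * Y n.  For a lag m >= 1 the products W m n are
  centred, bounded by 1, have variance at most sigma (n + m) * sigma n <= D^2 n^(-2a), and are
  independent along each of the two parity classes {n. ((n - 1) div m) mod 2 = k}, because the
  index pairs {n, n + m} in one class are disjoint.  A Bernstein-type Chernoff bound for such sums,
  with total variance V_N ~ N^(1-2a), shows that the cosine or sine part of a class sum at a grid
  frequency j / N^2 exceeds eps_N = sqrt (24 V_N log N) with probability at most 2 N^(-6).  A union
  bound over m <= N, j <= N^2, both classes and both parts bounds the "bad event" by 16 N^(-3), so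
  by Borel-Cantelli almost surely only finitely many bad events occur.  Off the bad event, rounding
  t to the grid costs at most 2 pi, so every lag sum is at most 4 eps_N + 2 pi; the finitely many
  remaining N are covered by the trivial bound N.
*)

lemma e_cis: "e t = cis (2 * pi * t)"
  by (simp add: e_def cis_conv_exp mult_ac)

lemma norm_e [simp]: "norm (e t) = 1"
  by (simp add: e_cis)

lemma norm_e_diff_le: "norm (e x - e y) \<le> 2 * pi * \<bar>x - y\<bar>"
proof -
  have "e x - e y = e y * (exp (\<i> * of_real (2 * pi * (x - y))) - 1)"
    by (simp add: e_def algebra_simps flip: exp_add)
  also have "norm \<dots> = norm (exp (\<i> * of_real (2 * pi * (x - y))) - 1)"
    by (simp add: norm_mult)
  also have "\<dots> \<le> \<bar>2 * pi * (x - y)\<bar>"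
    using iexp_approx1[of "2 * pi * (x - y)" 0] by simp
  finally show ?thesis by (simp add: abs_mult)
qed

definition trig :: "bool \<Rightarrow> real \<Rightarrow> real" where
  "trig p u = (if p then cos (2 * pi * u) else sin (2 * pi * u))"

lemma norm_exp_sum_le_trig:
  fixes w :: "nat \<Rightarrow> real"
  shows "norm (\<Sum>n\<in>L. of_real (w n) * e (real n * t))
    \<le> \<bar>\<Sum>n\<in>L. trig True (real n * t) * w n\<bar> + \<bar>\<Sum>n\<in>L. trig False (real n * t) * w n\<bar>"
  using cmod_le[of "\<Sum>n\<in>L. of_real (w n) * e (real n * t)"]
  by (simp add: e_cis trig_def mult_ac)

lemma norm_exp_sum_le_length:
  fixes w :: "nat \<Rightarrow> real" assumes "\<And>n. \<bar>w n\<bar> \<le> 1"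
  shows "norm (\<Sum>n=1..K. of_real (w n) * e (real n * t)) \<le> real K"
proof -
  have "norm (\<Sum>n=1..K. of_real (w n) * e (real n * t)) \<le> (\<Sum>n=1..K. norm (of_real (w n) * e (real n * t)))"
    by (rule norm_sum)
  also have "\<dots> \<le> (\<Sum>n=1..K. 1)"
    by (intro sum_mono) (simp add: norm_mult assms)
  finally show ?thesis by simp
qed

lemma exp_sum_perturb:
  fixes w :: "nat \<Rightarrow> real"
  assumes w: "\<And>n. \<bar>w n\<bar> \<le> 1" and K: "K \<le> N" and N: "N \<ge> 1" and ts: "\<bar>t - s\<bar> \<le> 1 / real (N^2)"
  shows "norm ((\<Sum>n=1..K. of_real (w n) * e (real n * t)) - (\<Sum>n=1..K. of_real (w n) * e (real n * s))) \<le> 2 * pi"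
proof -
  have each: "norm (of_real (w n) * (e (real n * t) - e (real n * s))) \<le> 2 * pi / real N"
    if n: "n \<in> {1..K}" for n
  proof -
    have "norm (of_real (w n) * (e (real n * t) - e (real n * s))) \<le> 1 * (2 * pi * \<bar>real n * t - real n * s\<bar>)"
      unfolding norm_mult by (intro mult_mono norm_e_diff_le) (auto simp: w)
    also have "\<bar>real n * t - real n * s\<bar> = real n * \<bar>t - s\<bar>"
      by (simp add: abs_mult flip: right_diff_distrib)
    also have "\<dots> \<le> real N * (1 / real (N^2))"
      using n K ts by (intro mult_mono) auto
    also have "\<dots> = 1 / real N" using N by (simp add: power2_eq_square)
    finally show ?thesis by simp
  qed
  have "norm ((\<Sum>n=1..K. of_real (w n) * e (real n * t)) - (\<Sum>n=1..K. of_real (w n) * e (real n * s)))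
      \<le> (\<Sum>n=1..K. norm (of_real (w n) * (e (real n * t) - e (real n * s))))"
    unfolding sum_subtractf[symmetric] right_diff_distrib[symmetric] by (rule norm_sum)
  also have "\<dots> \<le> real K * (2 * pi / real N)"
    using sum_bounded_above[of "{1..K}", OF each] by simp
  also have "\<dots> \<le> real N * (2 * pi / real N)"
    using K by (intro mult_right_mono) auto
  finally show ?thesis using N by simp
qed

lemma grid_point:
  assumes N: "N \<ge> 1" and t: "t \<in> {0..1}"
  obtains j :: nat where "j \<le> N^2" "\<bar>t - real j / real (N^2)\<bar> \<le> 1 / real (N^2)"
proof
  define x where "x = t * real (N^2)"
  have NN: "0 < real (N^2)" using N by simp
  have x: "0 \<le> x" "x \<le> real (N^2)" using t NN by (auto simp: x_def mult_left_le_one_le)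
  show "nat \<lfloor>x\<rfloor> \<le> N^2" using x by (simp add: nat_le_iff floor_le_iff)
  have "t - real (nat \<lfloor>x\<rfloor>) / real (N^2) = (x - real (nat \<lfloor>x\<rfloor>)) / real (N^2)"
    using NN by (simp add: x_def diff_divide_distrib)
  moreover have "0 \<le> x - real (nat \<lfloor>x\<rfloor>)" "x - real (nat \<lfloor>x\<rfloor>) \<le> 1" using x by linarith+
  ultimately show "\<bar>t - real (nat \<lfloor>x\<rfloor>) / real (N^2)\<bar> \<le> 1 / real (N^2)"
    using NN by (simp add: divide_right_mono)
qed

text \<open>A discrete form of \<open>(x\<^sup>1\<^sup>-\<^sup>b)' = (1 - b) x\<^sup>-\<^sup>b\<close>, obtained from Young's inequality; summed
  telescopically it bounds \<open>\<Sum>n\<le>N. n\<^sup>-\<^sup>b\<close> by \<open>N\<^sup>1\<^sup>-\<^sup>b / (1 - b)\<close>.\<close>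
lemma powr_increment_ge:
  fixes b x :: real assumes b: "0 \<le> b" "b < 1" and x: "1 \<le> x"
  shows "(1 - b) * x powr (-b) \<le> x powr (1 - b) - (x - 1) powr (1 - b)"
proof -
  have young: "(x - 1) powr (1 - b) * x powr b \<le> x - 1 + b"
  proof (cases "x = 1")
    case False
    then have "(x - 1) powr (1 - b) * x powr b \<le> (1 - b) * (x - 1) + b * x"
      using x b by (intro Youngs_inequality_0) auto
    then show ?thesis by (simp add: algebra_simps)
  qed (use b in simp)
  have "(x - 1) powr (1 - b) = (x - 1) powr (1 - b) * x powr b * x powr (-b)"
    using x by (simp add: mult.assoc flip: powr_add)
  also have "\<dots> \<le> (x - 1 + b) * x powr (-b)"
    by (intro mult_right_mono young) auto
  also have "\<dots> = x powr (1 - b) - (1 - b) * x powr (-b)"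
    using x by (simp add: algebra_simps powr_add[of x 1 "-b", simplified] flip: powr_add)
  finally show ?thesis by simp
qed

lemma sum_powr_le:
  fixes b :: real assumes "0 \<le> b" "b < 1"
  shows "(\<Sum>n=1..N. real n powr (-b)) \<le> real N powr (1 - b) / (1 - b)"
proof -
  have "(1 - b) * (\<Sum>n=1..N. real n powr (-b)) \<le> real N powr (1 - b)"
  proof (induction N)
    case (Suc N)
    have "(1 - b) * (\<Sum>n=1..Suc N. real n powr (-b))
          = (1 - b) * (\<Sum>n=1..N. real n powr (-b)) + (1 - b) * real (Suc N) powr (-b)"
      by (simp add: algebra_simps)
    also have "\<dots> \<le> real N powr (1 - b) + (real (Suc N) powr (1 - b) - real N powr (1 - b))"
      using Suc.IH powr_increment_ge[OF assms, of "real (Suc N)"] by simp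
    finally show ?case by simp
  qed simp
  then show ?thesis using assms by (simp add: field_simps)
qed

lemma exp_le_quadratic:
  fixes y :: real assumes "\<bar>y\<bar> \<le> 1" shows "exp y \<le> 1 + y + y^2"
proof (cases "y \<ge> 0")
  case True then show ?thesis using exp_bound[of y] assms by auto
next
  case False
  have "1 - y \<le> exp (-y)" using exp_ge_add_one_self[of "-y"] by simp
  then have "exp y \<le> 1 / (1 - y)" using False
    by (simp add: exp_minus field_simps)
  also have "\<dots> \<le> 1 + y + y^2"
  proof -
    have "1 \<le> (1 - y) * (1 + y + y^2)" using False
      by (simp add: algebra_simps power2_eq_square power3_eq_cube mult_nonneg_nonpos2 mult_nonpos_nonpos)
    then show ?thesis using False by (simp add: field_simps)
  qed
  finally show ?thesis .
qed

text \<open>Needed to see that the optimal Chernoff parameter eventually lies in \<open>(0, 1]\<close>.\<close>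
lemma log_ratio_sqrt_tendsto_0:
  fixes B c :: real assumes "0 < B" "0 < c"
  shows "(\<lambda>N::nat. sqrt (6 * ln (real N) / (B * real N powr c))) \<longlonglongrightarrow> 0"
  using assms by real_asymp

lemma uniform_from_eventual:
  fixes S :: "nat \<Rightarrow> 'b \<Rightarrow> 'c \<Rightarrow> real" and g :: "nat \<Rightarrow> real"
  assumes large: "\<And>N x y. N \<ge> N0 \<Longrightarrow> N \<ge> 2 \<Longrightarrow> x \<in> A N \<Longrightarrow> y \<in> T \<Longrightarrow> S N x y \<le> K * g N + L"
    and crude: "\<And>N x y. x \<in> A N \<Longrightarrow> y \<in> T \<Longrightarrow> S N x y \<le> real N"
    and g: "\<And>N. N \<ge> 2 \<Longrightarrow> c \<le> g N" and c: "0 < c" and K: "0 \<le> K" and L: "0 \<le> L"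
  shows "\<exists>C. \<forall>N. N \<ge> 2 \<longrightarrow> (\<forall>x\<in>A N. \<forall>y\<in>T. S N x y \<le> C * g N)"
proof (intro exI allI impI ballI)
  fix N x y assume N: "N \<ge> 2" and x: "x \<in> A N" and y: "y \<in> T"
  have gN: "c \<le> g N" "0 < g N" using g[OF N] c by auto
  have "(L + real N0) / c * c \<le> (L + real N0) / c * g N"
    using gN L c by (intro mult_left_mono) auto
  then have Lg: "L + real N0 \<le> (L + real N0) / c * g N" using c by simp
  have "S N x y \<le> K * g N + (L + real N0) / c * g N"
  proof (cases "N \<ge> N0")
    case True
    then show ?thesis using large[OF True N x y] Lg by simp
  next
    case False
    then have "S N x y \<le> L + real N0" using crude[OF x y] L by simp
    then show ?thesis using Lg K gN by (smt (verit) mult_nonneg_nonneg)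
  qed
  then show "S N x y \<le> (K + (L + real N0) / c) * g N" by (simp add: distrib_right)
qed

lemma dominated_by_convergent_ratio:
  fixes u v :: "nat \<Rightarrow> real"
  assumes "(\<lambda>n. u n / v n) \<longlonglongrightarrow> c" and v: "\<And>n. n \<ge> 1 \<Longrightarrow> 0 < v n"
  shows "\<exists>D>0. \<forall>n\<ge>1. u n \<le> D * v n"
proof -
  have "Bseq (\<lambda>n. u n / v n)" using assms(1) by (intro convergent_imp_Bseq convergentI)
  then obtain D where D: "0 < D" "\<And>n. norm (u n / v n) \<le> D" by (elim BseqE) auto
  have "u n \<le> D * v n" if "n \<ge> 1" for n
    using D(2)[of n] v[OF that] by (simp add: abs_le_iff field_simps)
  then show ?thesis using D(1) by blast
qed

lemma (in prob_space) sum_upper_tail: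
  fixes Z :: "'i \<Rightarrow> 'a \<Rightarrow> real"
  assumes fin: "finite I" and ind: "indep_vars (\<lambda>_. borel) Z I"
    and bnd: "\<And>i \<omega>. i \<in> I \<Longrightarrow> \<bar>Z i \<omega>\<bar> \<le> 1"
    and mean: "\<And>i. i \<in> I \<Longrightarrow> expectation (Z i) = 0"
    and var: "\<And>i. i \<in> I \<Longrightarrow> expectation (\<lambda>\<omega>. (Z i \<omega>)^2) \<le> v i"
    and l: "0 < l" "l \<le> 1" and V: "(\<Sum>i\<in>I. v i) \<le> V"
  shows "prob {\<omega>\<in>space M. \<epsilon> \<le> (\<Sum>i\<in>I. Z i \<omega>)} \<le> exp (l^2 * V - l * \<epsilon>)"
proof -
  have [measurable]: "i \<in> I \<Longrightarrow> Z i \<in> borel_measurable M" for i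
    using ind unfolding indep_vars_def by auto
  have mgf: "(\<integral>\<^sup>+\<omega>. ennreal (exp (l * Z i \<omega>)) \<partial>M) \<le> ennreal (exp (l^2 * v i))"
    if i: "i \<in> I" for i
  proof -
    let ?q = "\<lambda>\<omega>. 1 + l * Z i \<omega> + l^2 * (Z i \<omega>)^2"
    have int: "integrable M (Z i)" "integrable M (\<lambda>\<omega>. (Z i \<omega>)^2)"
      by (intro integrable_const_bound[where B=1]; use i bnd in \<open>simp add: abs_square_le_1\<close>)+
    have "(\<integral>\<^sup>+\<omega>. ennreal (exp (l * Z i \<omega>)) \<partial>M) \<le> (\<integral>\<^sup>+\<omega>. ennreal (?q \<omega>) \<partial>M)"
    proof (intro nn_integral_mono ennreal_leI)
      fix \<omega>
      have "\<bar>l * Z i \<omega>\<bar> \<le> 1" using bnd[OF i, of \<omega>] l by (simp add: abs_mult mult_le_one)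
      then show "exp (l * Z i \<omega>) \<le> ?q \<omega>"
        using exp_le_quadratic[of "l * Z i \<omega>"] by (simp add: power_mult_distrib)
    qed
    also have "\<dots> = ennreal (\<integral>\<omega>. ?q \<omega> \<partial>M)"
    proof (intro nn_integral_eq_integral AE_I2)
      fix \<omega> have "0 \<le> (l * Z i \<omega> + 1/2)^2 + 3/4" by simp
      then show "0 \<le> ?q \<omega>" by (simp add: power2_eq_square algebra_simps)
    qed (use int in auto)
    also have "(\<integral>\<omega>. ?q \<omega> \<partial>M) = 1 + l * expectation (Z i) + l^2 * expectation (\<lambda>\<omega>. (Z i \<omega>)^2)"
      using int by (simp add: prob_space)
    also have "\<dots> \<le> 1 + l^2 * v i" using mean[OF i] var[OF i] by (simp add: mult_left_mono)
    also have "\<dots> \<le> exp (l^2 * v i)" by (rule exp_ge_add_one_self)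
    finally show ?thesis by (simp add: ennreal_leI)
  qed
  have "ennreal (prob {\<omega>\<in>space M. \<epsilon> \<le> (\<Sum>i\<in>I. Z i \<omega>)})
      \<le> ennreal (exp (-l*\<epsilon>)) * (\<integral>\<^sup>+\<omega>. ennreal (exp (l * (\<Sum>i\<in>I. Z i \<omega>))) * indicator (space M) \<omega> \<partial>M)"
    unfolding emeasure_eq_measure[symmetric] by (intro Chernoff_ineq_nn_integral_ge l) auto
  also have "(\<integral>\<^sup>+\<omega>. ennreal (exp (l * (\<Sum>i\<in>I. Z i \<omega>))) * indicator (space M) \<omega> \<partial>M)
      = (\<integral>\<^sup>+\<omega>. (\<Prod>i\<in>I. ennreal (exp (l * Z i \<omega>))) \<partial>M)"
    by (intro nn_integral_cong) (simp_all add: sum_distrib_left exp_sum fin prod_ennreal)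
  also have "\<dots> = (\<Prod>i\<in>I. \<integral>\<^sup>+\<omega>. ennreal (exp (l * Z i \<omega>)) \<partial>M)"
    by (intro indep_vars_nn_integral fin indep_vars_compose2[OF ind]) auto
  also have "ennreal (exp (-l*\<epsilon>)) * \<dots> \<le> ennreal (exp (-l*\<epsilon>)) * (\<Prod>i\<in>I. ennreal (exp (l^2 * v i)))"
    by (intro mult_left_mono prod_mono_ennreal mgf) auto
  also have "\<dots> = ennreal (exp (-l*\<epsilon>) * exp (l^2 * (\<Sum>i\<in>I. v i)))"
    by (simp add: prod_ennreal exp_sum fin sum_distrib_left ennreal_mult prod_nonneg)
  also have "exp (-l*\<epsilon>) * exp (l^2 * (\<Sum>i\<in>I. v i)) = exp (l^2 * (\<Sum>i\<in>I. v i) - l * \<epsilon>)"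
    by (simp flip: exp_add)
  also have "\<dots> \<le> ennreal (exp (l^2 * V - l * \<epsilon>))"
    using V by (intro ennreal_leI) (simp add: mult_left_mono)
  finally show ?thesis by (simp add: ennreal_le_iff)
qed

lemma (in prob_space) sum_abs_tail:
  fixes Z :: "'i \<Rightarrow> 'a \<Rightarrow> real"
  assumes fin: "finite I" and ind: "indep_vars (\<lambda>_. borel) Z I"
    and bnd: "\<And>i \<omega>. i \<in> I \<Longrightarrow> \<bar>Z i \<omega>\<bar> \<le> 1"
    and mean: "\<And>i. i \<in> I \<Longrightarrow> expectation (Z i) = 0"
    and var: "\<And>i. i \<in> I \<Longrightarrow> expectation (\<lambda>\<omega>. (Z i \<omega>)^2) \<le> v i"
    and l: "0 < l" "l \<le> 1" and V: "(\<Sum>i\<in>I. v i) \<le> V"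
  shows "prob {\<omega>\<in>space M. \<epsilon> \<le> \<bar>\<Sum>i\<in>I. Z i \<omega>\<bar>} \<le> 2 * exp (l^2 * V - l * \<epsilon>)"
proof -
  have [measurable]: "i \<in> I \<Longrightarrow> Z i \<in> borel_measurable M" for i
    using ind unfolding indep_vars_def by auto
  have ind_neg: "indep_vars (\<lambda>_. borel) (\<lambda>i \<omega>. - Z i \<omega>) I"
    by (rule indep_vars_compose2[OF ind]) auto
  have "{\<omega>\<in>space M. \<epsilon> \<le> \<bar>\<Sum>i\<in>I. Z i \<omega>\<bar>}
      = {\<omega>\<in>space M. \<epsilon> \<le> (\<Sum>i\<in>I. Z i \<omega>)} \<union> {\<omega>\<in>space M. \<epsilon> \<le> (\<Sum>i\<in>I. - Z i \<omega>)}"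
    by (auto simp: sum_negf abs_if)
  then have "prob {\<omega>\<in>space M. \<epsilon> \<le> \<bar>\<Sum>i\<in>I. Z i \<omega>\<bar>}
      \<le> prob {\<omega>\<in>space M. \<epsilon> \<le> (\<Sum>i\<in>I. Z i \<omega>)} + prob {\<omega>\<in>space M. \<epsilon> \<le> (\<Sum>i\<in>I. - Z i \<omega>)}"
    by (simp add: measure_Un_le)
  also have "\<dots> \<le> exp (l^2 * V - l * \<epsilon>) + exp (l^2 * V - l * \<epsilon>)"
    by (intro add_mono sum_upper_tail[OF fin _ _ _ _ l V] ind ind_neg)
       (auto simp: bnd mean var)
  finally show ?thesis by simp
qed

lemma (in prob_space) AE_zero_one_valued:
  fixes Z :: "'a \<Rightarrow> real"
  assumes [measurable]: "Z \<in> borel_measurable M"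
    and "prob {\<omega>\<in>space M. Z \<omega> = 1} + prob {\<omega>\<in>space M. Z \<omega> = 0} = 1"
  shows "AE \<omega> in M. Z \<omega> = (if Z \<omega> = 1 then 1 else 0)"
proof -
  have "prob ({\<omega>\<in>space M. Z \<omega> = 1} \<union> {\<omega>\<in>space M. Z \<omega> = 0})
      = prob {\<omega>\<in>space M. Z \<omega> = 1} + prob {\<omega>\<in>space M. Z \<omega> = 0}"
    by (intro finite_measure_Union) auto
  then have "prob ({\<omega>\<in>space M. Z \<omega> = 1} \<union> {\<omega>\<in>space M. Z \<omega> = 0}) = 1"
    using assms(2) by simp
  then have "AE \<omega> in M. \<omega> \<in> {\<omega>\<in>space M. Z \<omega> = 1} \<union> {\<omega>\<in>space M. Z \<omega> = 0}"
    by (rule AE_prob_1)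
  then show ?thesis by eventually_elim auto
qed

text \<open>Index \<open>n \<ge> 1\<close> belongs to the block \<open>(n - 1) div m\<close> of length \<open>m\<close>. If \<open>n\<close> and \<open>n'\<close> lie in blocks of
  the same parity, then \<open>n + m\<close> lies in the next block, so the pairs \<open>{n, n + m}\<close> and
  \<open>{n', n' + m}\<close> are disjoint; hence the products \<open>W m n\<close> over such \<open>n\<close> are independent.\<close>
lemma next_block:
  fixes p m :: nat
  assumes "p \<ge> 1" "m \<ge> 1"
  shows "((p + m - 1) div m) mod 2 \<noteq> ((p - 1) div m) mod 2"
proof -
  obtain q where p: "p = Suc q" using assms(1) by (cases p) auto
  have "(q + m) div m = q div m + 1" using assms(2) by (simp add: div_add_self2)
  moreover have "(r + 1) mod 2 \<noteq> r mod 2" for r :: nat by presburger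
  ultimately show ?thesis unfolding p by simp
qed

lemma lag_pairs_disjoint:
  fixes n n' m k :: nat
  assumes "1 \<le> n" "1 \<le> n'" "n \<noteq> n'" "m \<ge> 1"
    and "((n - 1) div m) mod 2 = k" "((n' - 1) div m) mod 2 = k"
  shows "{n, n + m} \<inter> {n', n' + m} = {}"
  using next_block[of n m] next_block[of n' m] assms by auto

locale sparse_bernoulli = prob_space M for M :: "'w measure" +
  fixes X :: "nat \<Rightarrow> 'w \<Rightarrow> real" and \<sigma> :: "nat \<Rightarrow> real" and a D :: real
  assumes indep: "indep_vars (\<lambda>_. borel) X UNIV"
    and X_01: "\<And>n \<omega>. X n \<omega> = 0 \<or> X n \<omega> = 1"
    and prob_X_1: "\<And>n. prob {\<omega>\<in>space M. X n \<omega> = 1} = \<sigma> n"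
    and \<sigma>_nonneg: "\<And>n. 0 \<le> \<sigma> n" and \<sigma>_le_1: "\<And>n. \<sigma> n \<le> 1"
    and a_pos: "0 < a" and a_less: "a < 1/2"
    and D_pos: "0 < D" and \<sigma>_decay: "\<And>n. n \<ge> 1 \<Longrightarrow> \<sigma> n \<le> D * real n powr (-a)"
begin

definition Y :: "nat \<Rightarrow> 'w \<Rightarrow> real" where
  "Y n \<omega> = X n \<omega> - \<sigma> n"

definition W :: "nat \<Rightarrow> nat \<Rightarrow> 'w \<Rightarrow> real" where
  "W m n \<omega> = Y (n + m) \<omega> * Y n \<omega>"

lemma X_measurable [measurable]: "X n \<in> borel_measurable M"
  using indep unfolding indep_vars_def by auto

lemma Y_measurable [measurable]: "Y n \<in> borel_measurable M"
  unfolding Y_def by measurable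

lemma W_measurable [measurable]: "W m n \<in> borel_measurable M"
  unfolding W_def by measurable

lemma abs_Y_le_1: "\<bar>Y n \<omega>\<bar> \<le> 1"
  using X_01[of n \<omega>] \<sigma>_nonneg[of n] \<sigma>_le_1[of n] by (auto simp: Y_def)

lemma abs_W_le_1: "\<bar>W m n \<omega>\<bar> \<le> 1"
  unfolding W_def abs_mult using abs_Y_le_1[of "n + m" \<omega>] abs_Y_le_1[of n \<omega>]
  by (simp add: mult_le_one)

lemma integrable_bounded_by_1:
  fixes f :: "'w \<Rightarrow> real"
  shows "f \<in> borel_measurable M \<Longrightarrow> (\<And>\<omega>. \<bar>f \<omega>\<bar> \<le> 1) \<Longrightarrow> integrable M f"
  by (rule integrable_const_bound[where B=1]) auto

lemma abs_X_le_1: "\<bar>X n \<omega>\<bar> \<le> 1"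
  using X_01[of n \<omega>] by auto

lemma expectation_X: "expectation (X n) = \<sigma> n"
proof -
  have "expectation (X n) = expectation (indicator {\<omega>\<in>space M. X n \<omega> = 1})"
    by (intro Bochner_Integration.integral_cong) (use X_01 in \<open>auto simp: indicator_def\<close>)
  then show ?thesis using prob_X_1[of n] by simp
qed

lemma expectation_Y: "expectation (Y n) = 0"
  using expectation_X[of n] integrable_bounded_by_1[OF X_measurable abs_X_le_1]
  by (simp add: Y_def[abs_def] prob_space)

lemma expectation_Y_sq_le: "expectation (\<lambda>\<omega>. (Y n \<omega>)^2) \<le> \<sigma> n"
proof -
  have "(Y n \<omega>)^2 = (1 - 2 * \<sigma> n) * X n \<omega> + (\<sigma> n)^2" for \<omega>
    using X_01[of n \<omega>] by (auto simp: Y_def power2_eq_square algebra_simps)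
  then have "expectation (\<lambda>\<omega>. (Y n \<omega>)^2) = expectation (\<lambda>\<omega>. (1 - 2 * \<sigma> n) * X n \<omega> + (\<sigma> n)^2)"
    by (simp only:)
  also have "\<dots> = (1 - 2 * \<sigma> n) * \<sigma> n + (\<sigma> n)^2"
    using expectation_X[of n] integrable_bounded_by_1[OF X_measurable abs_X_le_1]
    by (simp add: prob_space)
  also have "\<dots> \<le> \<sigma> n" using \<sigma>_nonneg[of n] by (simp add: power2_eq_square algebra_simps)
  finally show ?thesis .
qed

lemma indep_var_coordinates:
  fixes f g :: "real \<Rightarrow> real"
  assumes "i \<noteq> j" "f \<in> borel_measurable borel" "g \<in> borel_measurable borel"
  shows "indep_var borel (\<lambda>\<omega>. f (X i \<omega>)) borel (\<lambda>\<omega>. g (X j \<omega>))"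
proof -
  have "indep_var (PiM {i} (\<lambda>_. borel)) (\<lambda>\<omega>. restrict (\<lambda>k. X k \<omega>) {i})
                  (PiM {j} (\<lambda>_. borel)) (\<lambda>\<omega>. restrict (\<lambda>k. X k \<omega>) {j})"
    by (rule indep_var_restrict[OF indep]) (use assms(1) in auto)
  then have "indep_var borel ((\<lambda>h. f (h i)) \<circ> (\<lambda>\<omega>. restrict (\<lambda>k. X k \<omega>) {i}))
                       borel ((\<lambda>h. g (h j)) \<circ> (\<lambda>\<omega>. restrict (\<lambda>k. X k \<omega>) {j}))"
    by (rule indep_var_compose) (use assms(2,3) in auto)
  then show ?thesis by (simp add: comp_def)
qed

text \<open>For \<open>m \<ge> 1\<close> the factors of \<open>W m n\<close> are independent, so \<open>W m n\<close> is centred and its second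
  moment factorises.\<close>
lemma expectation_W: "m \<ge> 1 \<Longrightarrow> expectation (W m n) = 0"
  using indep_var_lebesgue_integral[OF indep_var_coordinates[of "n + m" n "\<lambda>x. x - \<sigma> (n + m)" "\<lambda>x. x - \<sigma> n"]]
        integrable_bounded_by_1[OF Y_measurable abs_Y_le_1]
  by (simp add: W_def[abs_def] Y_def[abs_def] expectation_Y[unfolded Y_def[abs_def]])

lemma expectation_W_sq_le: "m \<ge> 1 \<Longrightarrow> expectation (\<lambda>\<omega>. (W m n \<omega>)^2) \<le> \<sigma> (n + m) * \<sigma> n"
proof -
  assume m: "m \<ge> 1"
  have "expectation (\<lambda>\<omega>. (W m n \<omega>)^2)
      = expectation (\<lambda>\<omega>. (Y (n + m) \<omega>)^2) * expectation (\<lambda>\<omega>. (Y n \<omega>)^2)"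
    using indep_var_lebesgue_integral[OF indep_var_coordinates[of "n + m" n "\<lambda>x. (x - \<sigma> (n + m))^2" "\<lambda>x. (x - \<sigma> n)^2"]]
          integrable_bounded_by_1[of "\<lambda>\<omega>. (Y _ \<omega>)^2"] m abs_Y_le_1
    by (simp add: W_def power_mult_distrib Y_def abs_square_le_1)
  also have "\<dots> \<le> \<sigma> (n + m) * \<sigma> n"
    by (intro mult_mono expectation_Y_sq_le integral_nonneg_AE) (auto simp: \<sigma>_nonneg)
  finally show ?thesis .
qed

definition parity_block :: "nat \<Rightarrow> nat \<Rightarrow> nat \<Rightarrow> nat set" where
  "parity_block N m k = {n \<in> {1..N - m}. ((n - 1) div m) mod 2 = k}"

lemma indep_W_parity_block:
  assumes "m \<ge> 1"
  shows "indep_vars (\<lambda>_. borel) (\<lambda>n \<omega>. c n * W m n \<omega>) (parity_block N m k)"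
proof -
  have "indep_vars (\<lambda>n. PiM {n, n + m} (\<lambda>_. borel)) (\<lambda>n \<omega>. restrict (\<lambda>i. X i \<omega>) {n, n + m})
          (parity_block N m k)"
    by (intro indep_vars_restrict[OF indep])
       (use lag_pairs_disjoint assms in \<open>auto simp: disjoint_family_on_def parity_block_def\<close>)
  then have "indep_vars (\<lambda>_. borel)
      (\<lambda>n \<omega>. (\<lambda>h. c n * ((h (n + m) - \<sigma> (n + m)) * (h n - \<sigma> n))) (restrict (\<lambda>i. X i \<omega>) {n, n + m}))
      (parity_block N m k)"
  proof (rule indep_vars_compose2)
    fix n
    have [measurable]: "(\<lambda>h. h n) \<in> borel_measurable (PiM {n, n + m} (\<lambda>_. borel :: real measure))"
      by (rule measurable_component_singleton) auto
    have [measurable]: "(\<lambda>h. h (n + m)) \<in> borel_measurable (PiM {n, n + m} (\<lambda>_. borel :: real measure))"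
      by (rule measurable_component_singleton) auto
    show "(\<lambda>h. c n * ((h (n + m) - \<sigma> (n + m)) * (h n - \<sigma> n))) \<in> borel_measurable (PiM {n, n + m} (\<lambda>_. borel))"
      by measurable
  qed
  then show ?thesis by (simp add: W_def Y_def)
qed

lemma parity_block_tail:
  assumes m: "m \<ge> 1" and c: "\<And>n. \<bar>c n\<bar> \<le> 1" and l: "0 < l" "l \<le> 1"
    and V: "(\<Sum>n\<in>parity_block N m k. \<sigma> (n + m) * \<sigma> n) \<le> V"
  shows "prob {\<omega>\<in>space M. \<epsilon> \<le> \<bar>\<Sum>n\<in>parity_block N m k. c n * W m n \<omega>\<bar>} \<le> 2 * exp (l^2 * V - l * \<epsilon>)"
proof (rule sum_abs_tail[OF _ indep_W_parity_block[OF m] _ _ _ l V])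
  show "\<bar>c n * W m n \<omega>\<bar> \<le> 1" for n \<omega>
    unfolding abs_mult by (intro mult_le_one) (auto simp: c abs_W_le_1)
  show "expectation (\<lambda>\<omega>. c n * W m n \<omega>) = 0" for n
    using expectation_W[OF m] by simp
  show "expectation (\<lambda>\<omega>. (c n * W m n \<omega>)^2) \<le> \<sigma> (n + m) * \<sigma> n" for n
  proof -
    have "expectation (\<lambda>\<omega>. (c n * W m n \<omega>)^2) = (c n)^2 * expectation (\<lambda>\<omega>. (W m n \<omega>)^2)"
      by (simp add: power_mult_distrib)
    also have "\<dots> \<le> 1 * (\<sigma> (n + m) * \<sigma> n)"
      using c[of n] expectation_W_sq_le[OF m, of n]
      by (intro mult_mono) (auto simp: abs_square_le_1 \<sigma>_nonneg)
    finally show ?thesis by simp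
  qed
qed (simp add: parity_block_def)

lemma lag_product_le: "n \<ge> 1 \<Longrightarrow> \<sigma> (n + m) * \<sigma> n \<le> D^2 * real n powr (-(2 * a))"
proof -
  assume n: "n \<ge> 1"
  have "\<sigma> (n + m) \<le> D * real (n + m) powr (-a)" using \<sigma>_decay[of "n + m"] n by auto
  also have "\<dots> \<le> D * real n powr (-a)"
    using n a_pos D_pos by (intro mult_left_mono powr_mono2') auto
  finally have "\<sigma> (n + m) * \<sigma> n \<le> (D * real n powr (-a)) * (D * real n powr (-a))"
    by (intro mult_mono \<sigma>_decay n) (use D_pos \<sigma>_nonneg in auto)
  also have "\<dots> = D^2 * real n powr (-(2 * a))"
    by (simp add: power2_eq_square algebra_simps flip: powr_add)
  finally show ?thesis .
qed

definition variance_budget :: "nat \<Rightarrow> real" where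
  "variance_budget N = D^2 / (1 - 2 * a) * real N powr (1 - 2 * a)"

lemma lag_variance_le: "(\<Sum>n\<in>parity_block N m k. \<sigma> (n + m) * \<sigma> n) \<le> variance_budget N"
proof -
  have "(\<Sum>n\<in>parity_block N m k. \<sigma> (n + m) * \<sigma> n) \<le> (\<Sum>n=1..N. \<sigma> (n + m) * \<sigma> n)"
    by (intro sum_mono2) (auto simp: parity_block_def \<sigma>_nonneg)
  also have "\<dots> \<le> (\<Sum>n=1..N. D^2 * real n powr (-(2 * a)))"
    by (intro sum_mono lag_product_le) auto
  also have "\<dots> = D^2 * (\<Sum>n=1..N. real n powr (-(2 * a)))"
    by (simp add: sum_distrib_left)
  also have "\<dots> \<le> D^2 * (real N powr (1 - 2 * a) / (1 - 2 * a))"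
    using sum_powr_le[of "2 * a" N] a_pos a_less by (intro mult_left_mono) auto
  finally show ?thesis by (simp add: variance_budget_def)
qed

text \<open>The deviation threshold \<open>\<epsilon>\<^sub>N = \<surd>(24 V\<^sub>N log N)\<close> and the Chernoff parameter
  \<open>\<lambda>\<^sub>N = \<surd>(6 log N / V\<^sub>N)\<close> are chosen so that the Chernoff exponent
  \<open>\<lambda>\<^sub>N\<^sup>2 V\<^sub>N - \<lambda>\<^sub>N \<epsilon>\<^sub>N\<close> equals \<open>-6 log N\<close>.\<close>
definition threshold :: "nat \<Rightarrow> real" where
  "threshold N = sqrt (24 * variance_budget N * ln (real N))"

definition rate :: "nat \<Rightarrow> real" where
  "rate N = sqrt (6 * ln (real N) / variance_budget N)"

lemma variance_budget_pos: "N \<ge> 1 \<Longrightarrow> 0 < variance_budget N"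
  using D_pos a_less by (simp add: variance_budget_def)

lemma chernoff_exponent:
  assumes "N \<ge> 1"
  shows "(rate N)^2 * variance_budget N - rate N * threshold N = - 6 * ln (real N)"
proof -
  have V: "0 < variance_budget N" and L: "0 \<le> ln (real N)"
    using variance_budget_pos assms by auto
  have "(rate N)^2 * variance_budget N = 6 * ln (real N)"
    using V L by (simp add: rate_def)
  moreover have "rate N * threshold N = sqrt ((12 * ln (real N))^2)"
    unfolding rate_def threshold_def real_sqrt_mult[symmetric]
    using V by (simp add: power2_eq_square field_simps)
  ultimately show ?thesis using L by (simp only: real_sqrt_abs abs_of_nonneg)
qed

lemma eventually_rate_le_1: "eventually (\<lambda>N. rate N \<le> 1) sequentially"
proof -
  have "rate \<longlonglongrightarrow> 0"
    unfolding rate_def variance_budget_def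
    using D_pos a_less by (intro log_ratio_sqrt_tendsto_0) auto
  then show ?thesis using order_tendstoD(2)[of rate 0 sequentially 1] by (auto elim: eventually_mono)
qed

lemma rate_pos: "N \<ge> 2 \<Longrightarrow> 0 < rate N"
  using variance_budget_pos[of N] by (simp add: rate_def)

lemma threshold_eq:
  "threshold N = sqrt (24 * D^2 / (1 - 2 * a)) * (real N powr (1/2 - a) * sqrt (ln (real N)))"
proof -
  have "sqrt (real N powr (1 - 2 * a)) = real N powr (1/2 - a)"
    using powr_half_sqrt_powr[of "real N" "1 - 2 * a"] by (simp add: diff_divide_distrib)
  moreover have "24 * variance_budget N * ln (real N)
      = 24 * D^2 / (1 - 2 * a) * (real N powr (1 - 2 * a) * ln (real N))"
    by (simp add: variance_budget_def)
  ultimately show ?thesis by (simp only: threshold_def real_sqrt_mult)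
qed

definition deviation_event :: "nat \<Rightarrow> nat \<Rightarrow> nat \<Rightarrow> nat \<Rightarrow> bool \<Rightarrow> 'w set" where
  "deviation_event N m j k p = {\<omega>\<in>space M.
     threshold N \<le> \<bar>\<Sum>n\<in>parity_block N m k. trig p (real n * (real j / real (N^2))) * W m n \<omega>\<bar>}"

definition bad_event :: "nat \<Rightarrow> 'w set" where
  "bad_event N = (\<Union>(m, j, k, p) \<in> {1..N} \<times> {0..N^2} \<times> {0..1} \<times> UNIV. deviation_event N m j k p)"

lemma bad_event_sets [measurable]: "bad_event N \<in> sets M"
  unfolding bad_event_def deviation_event_def by (intro sets.finite_UN) auto

lemma deviation_event_subset:
  "m \<in> {1..N} \<Longrightarrow> j \<le> N^2 \<Longrightarrow> k \<le> 1 \<Longrightarrow> deviation_event N m j k p \<subseteq> bad_event N"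
  unfolding bad_event_def by (intro subsetI UN_I[of "(m, j, k, p)"]) auto

lemma prob_deviation_event:
  assumes "m \<ge> 1" "N \<ge> 2" "rate N \<le> 1"
  shows "prob (deviation_event N m j k p) \<le> 2 * real N powr (-6)"
proof -
  have "prob (deviation_event N m j k p)
      \<le> 2 * exp ((rate N)^2 * variance_budget N - rate N * threshold N)"
    unfolding deviation_event_def
    by (rule parity_block_tail[OF assms(1) _ rate_pos[OF assms(2)] assms(3) lag_variance_le])
       (use assms in \<open>auto simp: trig_def\<close>)
  also have "\<dots> = 2 * real N powr (-6)"
    using assms(2) by (simp add: chernoff_exponent powr_def)
  finally show ?thesis .
qed

text \<open>The bad event is a union of at most \<open>8 N\<^sup>3\<close> deviation events.\<close>
lemma prob_bad_event:
  assumes N: "N \<ge> 2" and rate: "rate N \<le> 1"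
  shows "prob (bad_event N) \<le> 16 / real N ^ 3"
proof -
  let ?I = "{1..N} \<times> {0..N^2} \<times> {0..1::nat} \<times> (UNIV :: bool set)"
  let ?A = "\<lambda>(m, j, k, p). deviation_event N m j k p"
  have "prob (bad_event N) \<le> (\<Sum>q\<in>?I. prob (?A q))"
    unfolding bad_event_def by (intro measure_UNION_le) (auto simp: deviation_event_def)
  also have "\<dots> \<le> real (card ?I) * (2 * real N powr (-6))"
    by (intro sum_bounded_above) (use prob_deviation_event N rate in auto)
  also have "real (card ?I) \<le> 8 * real N ^ 3"
  proof -
    have "card ?I = N * (N^2 + 1) * 4" by (simp add: card_cartesian_product algebra_simps)
    also have "\<dots> \<le> N * (2 * N^2) * 4" using N by (intro mult_right_mono mult_left_mono) auto
    also have "\<dots> = 8 * N^3" by (simp add: power2_eq_square power3_eq_cube)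
    finally have "real (card ?I) \<le> real (8 * N^3)" by (simp only: of_nat_le_iff)
    then show ?thesis by simp
  qed
  also have "8 * real N ^ 3 * (2 * real N powr (-6)) = 16 / real N ^ 3"
    using N by (simp add: powr_minus powr_realpow field_simps)
  finally show ?thesis by (simp add: mult_right_mono)
qed

lemma AE_eventually_not_bad: "AE \<omega> in M. eventually (\<lambda>N. \<omega> \<notin> bad_event N) sequentially"
proof -
  have "summable (\<lambda>N. prob (bad_event N))"
  proof (rule summable_comparison_test_ev)
    show "summable (\<lambda>N. 16 * inverse (real N ^ 3))"
      by (intro summable_mult inverse_power_summable) auto
    show "eventually (\<lambda>N. norm (prob (bad_event N)) \<le> 16 * inverse (real N ^ 3)) sequentially"
      using eventually_rate_le_1 eventually_ge_at_top[of "2::nat"]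
      by eventually_elim (use prob_bad_event in \<open>auto simp: divide_inverse\<close>)
  qed
  then have "AE \<omega> in M. eventually (\<lambda>N. \<omega> \<in> space M - bad_event N) sequentially"
    by (intro borel_cantelli_AE1) (auto simp: emeasure_eq_measure)
  then show ?thesis by eventually_elim (auto elim: eventually_mono)
qed

text \<open>Outside the bad event, the lag-\<open>m\<close> sum is at most \<open>4 \<epsilon>\<^sub>N + 2\<pi>\<close> at every frequency: round
  \<open>t\<close> to the grid, split the sum by parity blocks and into cosine and sine parts.\<close>
lemma bound_outside_bad_event:
  assumes \<omega>: "\<omega> \<in> space M" "\<omega> \<notin> bad_event N" and N: "N \<ge> 1"
    and m: "m \<in> {1..N}" and t: "t \<in> {0..1}"
  shows "norm (\<Sum>n=1..N-m. of_real (W m n \<omega>) * e (real n * t)) \<le> 4 * threshold N + 2 * pi"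
proof -
  obtain j where j: "j \<le> N^2" and tj: "\<bar>t - real j / real (N^2)\<bar> \<le> 1 / real (N^2)"
    using grid_point[OF N t] .
  let ?s = "real j / real (N^2)"
  let ?S = "\<lambda>L u. \<Sum>n\<in>L. of_real (W m n \<omega>) * e (real n * u)"
  have block: "norm (?S (parity_block N m k) ?s) \<le> 2 * threshold N" if "k \<le> 1" for k
  proof -
    have "\<omega> \<notin> deviation_event N m j k p" for p
      using \<omega>(2) deviation_event_subset[OF m j that] by blast
    then have "\<not> threshold N \<le> \<bar>\<Sum>n\<in>parity_block N m k. trig p (real n * ?s) * W m n \<omega>\<bar>" for p
      using \<omega>(1) by (simp add: deviation_event_def)
    then have small: "\<bar>\<Sum>n\<in>parity_block N m k. trig p (real n * ?s) * W m n \<omega>\<bar> \<le> threshold N" for p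
      by (meson nle_le)
    have "norm (?S (parity_block N m k) ?s)
        \<le> \<bar>\<Sum>n\<in>parity_block N m k. trig True (real n * ?s) * W m n \<omega>\<bar>
          + \<bar>\<Sum>n\<in>parity_block N m k. trig False (real n * ?s) * W m n \<omega>\<bar>"
      by (rule norm_exp_sum_le_trig[where w="\<lambda>n. W m n \<omega>"])
    also have "\<dots> \<le> 2 * threshold N" using small[of True] small[of False] by simp
    finally show ?thesis .
  qed
  have parities: "{1..N-m} = parity_block N m 0 \<union> parity_block N m 1"
    by (auto simp: parity_block_def)
  have "norm (?S {1..N-m} ?s) \<le> norm (?S (parity_block N m 0) ?s) + norm (?S (parity_block N m 1) ?s)"
    unfolding parities by (subst sum.union_disjoint) (auto simp: parity_block_def intro: norm_triangle_ineq)
  then have grid: "norm (?S {1..N-m} ?s) \<le> 4 * threshold N"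
    using block[of 0] block[of 1] by linarith
  have "norm (?S {1..N-m} t - ?S {1..N-m} ?s) \<le> 2 * pi"
    using N tj by (intro exp_sum_perturb abs_W_le_1) auto
  then show ?thesis using grid norm_triangle_ineq2[of "?S {1..N-m} t" "?S {1..N-m} ?s"] by simp
qed

theorem lag_sums_bound:
  "AE \<omega> in M. \<exists>C. \<forall>N::nat. N \<ge> 2 \<longrightarrow> (\<forall>m\<in>{1..N}. \<forall>t\<in>{0..1::real}.
     norm (\<Sum>n=1..N-m. of_real (W m n \<omega>) * e (real n * t)) \<le> C * (real N powr (1/2 - a) * sqrt (ln (real N))))"
  using AE_eventually_not_bad AE_space
proof eventually_elim
  case (elim \<omega>)
  then obtain N0 where N0: "\<And>N. N \<ge> N0 \<Longrightarrow> \<omega> \<notin> bad_event N"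
    by (auto simp: eventually_sequentially)
  show ?case
  proof (rule uniform_from_eventual)
    show "norm (\<Sum>n=1..N-m. of_real (W m n \<omega>) * e (real n * t))
        \<le> 4 * sqrt (24 * D^2 / (1 - 2 * a)) * (real N powr (1/2 - a) * sqrt (ln (real N))) + 2 * pi"
      if "N \<ge> N0" "N \<ge> 2" "m \<in> {1..N}" "t \<in> {0..1}" for N m t
      using bound_outside_bad_event[OF elim(2) N0, of N m t] that by (simp add: threshold_eq mult.assoc)
    show "norm (\<Sum>n=1..N-m. of_real (W m n \<omega>) * e (real n * t)) \<le> real N" for N m t
      using norm_exp_sum_le_length[where w="\<lambda>n. W m n \<omega>" and K="N - m" and t=t] abs_W_le_1 by simp
    show "sqrt (ln 2) \<le> real N powr (1/2 - a) * sqrt (ln (real N))" if "N \<ge> 2" for N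
      using that a_less mult_mono[of 1 "real N powr (1/2 - a)" "sqrt (ln 2)" "sqrt (ln (real N))"]
      by (simp add: ge_one_powr_ge_zero)
  qed (use a_less in auto)
qed

end

text \<open>The main result: up to a null set, the hypotheses describe an instance of \<open>sparse_bernoulli\<close>.\<close>
theorem proposition3p2:
  fixes M :: "'w measure" and X :: "nat \<Rightarrow> 'w \<Rightarrow> real"
    and \<sigma> :: "nat \<Rightarrow> real" and a :: real
  assumes "prob_space M"
    and indep: "prob_space.indep_vars M (\<lambda>_. borel) X UNIV"
    and dist1: "\<And>n. measure M {\<omega> \<in> space M. X n \<omega> = 1} = \<sigma> n"
    and dist0: "\<And>n. measure M {\<omega> \<in> space M. X n \<omega> = 0} = 1 - \<sigma> n"
    and sigma_range: "\<And>n. \<sigma> n \<in> {0..1}"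
    and a_range: "0 < a" "a < 1/2"
    and asymp: "\<exists>c. c \<noteq> 0 \<and> (\<lambda>n. \<sigma> n / real n powr (-a)) \<longlonglongrightarrow> c"
  shows "AE \<omega> in M. \<exists>C. \<forall>N::nat. N \<ge> 2 \<longrightarrow>
           (\<forall>m\<in>{1..N}. \<forall>t\<in>{0..1::real}.
              norm (\<Sum>n=1..N-m. of_real ((X (n+m) \<omega> - \<sigma> (n+m)) * (X n \<omega> - \<sigma> n)) * e (real n * t))
                \<le> C * real N powr (1/2 - a) * sqrt (ln (real N)))"
proof -
  interpret prob_space M by fact
  have [measurable]: "X n \<in> borel_measurable M" for n
    using indep unfolding indep_vars_def by auto
  obtain D where D: "0 < D" "\<And>n. n \<ge> 1 \<Longrightarrow> \<sigma> n \<le> D * real n powr (-a)"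
    using asymp dominated_by_convergent_ratio[of \<sigma> "\<lambda>n. real n powr (-a)"] by auto
  define X01 where "X01 n \<omega> = (if X n \<omega> = 1 then 1 else (0::real))" for n \<omega>
  interpret sparse_bernoulli M X01 \<sigma> a D
  proof
    show "indep_vars (\<lambda>_. borel) X01 UNIV"
      unfolding X01_def by (rule indep_vars_compose2[OF indep]) auto
    have "{\<omega>\<in>space M. X01 n \<omega> = 1} = {\<omega>\<in>space M. X n \<omega> = 1}" for n
      by (auto simp: X01_def)
    then show "prob {\<omega>\<in>space M. X01 n \<omega> = 1} = \<sigma> n" for n
      using dist1[of n] by simp
  qed (use sigma_range a_range D in \<open>auto simp: X01_def\<close>)
  have "AE \<omega> in M. \<forall>n. X n \<omega> = X01 n \<omega>"
    unfolding AE_all_countable X01_def using dist0 dist1 by (intro allI AE_zero_one_valued) auto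
  then show ?thesis using lag_sums_bound
    by eventually_elim (simp add: W_def Y_def mult.assoc)
qed

end
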